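(* Let $X$ be an infinite set. No topological extension ${}^{*}X$ of $X$ satisfies simultaneously the three principles Ind, Poss and Tran.
   Context: A topological extension of a set $X$ is a $T_1$ topological space ${}^{*}X$ containing $X$ as a discrete dense subspace, together with an assignment to each function $f:X\to X$ of a continuous map ${}^{*}f:{}^{*}X\to{}^{*}X$ extending $f$, such that (c) ${}^{*}g\circ{}^{*}f={}^{*}(g\circ f)$ for all $f,g:X\to X$, and (i) if $f(x)=x$ for all $x\in A\subseteq X$, then ${}^{*}f(\xi)=\xi$ for all $\xi$ in the closure of $A$ in ${}^{*}X$. For $A\subseteq X$ write ${}^{*}A$ for the closure of $A$ in ${}^{*}X$. Principle Ind: for any two distinct $\xi,\eta\in{}^{*}X$ there is $A\subseteq X$ with $\xi\in{}^{*}A$ and $\eta\notin{}^{*}A$. Principle Poss: for every family $\mathcal F$ of subsets of $X$, if $\bigcap_{A\in\mathcal F}{}^{*}A=\emptyset$, then there are finitely many $A_1,\dots,A_n\in\mathcal F$ with $A_1\cap\dots\cap A_n=\emptyset$. Principle Tran: let $L$ be the first-order language having a constant symbol for each element of $X$, an $n$-ary relation symbol for each $R\subseteq X^n$ and an $n$-ary function symbol for each $F:X^n\to X$ ($n\ge1$), and regard $X$ as an $L$-structure in the obvious way. ${}^{*}X$ satisfies Tran if ${}^{*}X$ can be made into an $L$-structure in which each constant $x$ denotes $x$, each unary function symbol $f$ denotes ${}^{*}f$ and each unary relation symbol $A$ denotes ${}^{*}A$, such that for every $L$-sentence $\sigma$, $\sigma$ holds in $X$ if and only if $\sigma$ holds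 in ${}^{*}X$. *)

theory Defs
  imports "HOL-Analysis.Analysis"
begin

text \<open>X is modelled by the type 'a (all of it); *X is the carrier topspace T of a
topology T on a type 'b; the inclusion of X in *X is the injective map j.
star f is the extension *f.\<close>

definition starset :: "'b topology \<Rightarrow> ('a \<Rightarrow> 'b) \<Rightarrow> 'a set \<Rightarrow> 'b set" where
  "starset T j A = T closure_of (j ` A)"

definition top_ext :: "'b topology \<Rightarrow> ('a \<Rightarrow> 'b) \<Rightarrow> (('a \<Rightarrow> 'a) \<Rightarrow> 'b \<Rightarrow> 'b) \<Rightarrow> bool" where
  "top_ext T j star \<longleftrightarrow>
     t1_space T \<and>
     inj j \<and> range j \<subseteq> topspace T \<and>
     subtopology T (range j) = discrete_topology (range j) \<and>
     T closure_of (range j) = topspace T \<and>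
     (\<forall>f. continuous_map T T (star f) \<and> (\<forall>x. star f (j x) = j (f x))) \<and>
     (\<forall>f g. \<forall>\<xi>\<in>topspace T. star g (star f \<xi>) = star (g \<circ> f) \<xi>) \<and>
     (\<forall>f A. (\<forall>x\<in>A. f x = x) \<longrightarrow> (\<forall>\<xi>\<in>starset T j A. star f \<xi> = \<xi>))"

definition Ind :: "'b topology \<Rightarrow> ('a \<Rightarrow> 'b) \<Rightarrow> bool" where
  "Ind T j \<longleftrightarrow> (\<forall>\<xi>\<in>topspace T. \<forall>\<eta>\<in>topspace T. \<xi> \<noteq> \<eta> \<longrightarrow>
      (\<exists>A. \<xi> \<in> starset T j A \<and> \<eta> \<notin> starset T j A))"

definition Poss :: "'b topology \<Rightarrow> ('a \<Rightarrow> 'b) \<Rightarrow> bool" where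
  "Poss T j \<longleftrightarrow> (\<forall>F :: 'a set set. (\<Inter>A\<in>F. starset T j A) = {} \<longrightarrow>
      (\<exists>G. finite G \<and> G \<subseteq> F \<and> \<Inter>G = {}))"

text \<open>Constant symbols: elements of X.  n-ary function symbols: pairs (n, F) with
n \<ge> 1 and F : X^n \<rightarrow> X, where X^n is represented by lists of length n.
n-ary relation symbols: pairs (n, R) with n \<ge> 1, R \<subseteq> X^n (a set of lists;
only its lists of length n matter).\<close>

datatype 'a tm = Var nat | Cst 'a | App nat "'a list \<Rightarrow> 'a" "'a tm list"

datatype 'a fm = Eq "'a tm" "'a tm" | Rl nat "'a list set" "'a tm list"
  | Neg "'a fm" | Conj "'a fm" "'a fm" | Ex nat "'a fm"

fun wf_tm :: "'a tm \<Rightarrow> bool" where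
  "wf_tm (Var v) = True"
| "wf_tm (Cst c) = True"
| "wf_tm (App n F ts) = (n \<ge> 1 \<and> length ts = n \<and> (\<forall>t\<in>set ts. wf_tm t))"

fun wf_fm :: "'a fm \<Rightarrow> bool" where
  "wf_fm (Eq s t) = (wf_tm s \<and> wf_tm t)"
| "wf_fm (Rl n R ts) = (n \<ge> 1 \<and> length ts = n \<and> (\<forall>t\<in>set ts. wf_tm t))"
| "wf_fm (Neg p) = wf_fm p"
| "wf_fm (Conj p q) = (wf_fm p \<and> wf_fm q)"
| "wf_fm (Ex v p) = wf_fm p"

fun fv_tm :: "'a tm \<Rightarrow> nat set" where
  "fv_tm (Var v) = {v}"
| "fv_tm (Cst c) = {}"
| "fv_tm (App n F ts) = (\<Union>t\<in>set ts. fv_tm t)"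

fun fv_fm :: "'a fm \<Rightarrow> nat set" where
  "fv_fm (Eq s t) = fv_tm s \<union> fv_tm t"
| "fv_fm (Rl n R ts) = (\<Union>t\<in>set ts. fv_tm t)"
| "fv_fm (Neg p) = fv_fm p"
| "fv_fm (Conj p q) = fv_fm p \<union> fv_fm q"
| "fv_fm (Ex v p) = fv_fm p - {v}"

definition sentence :: "'a fm \<Rightarrow> bool" where
  "sentence \<sigma> \<longleftrightarrow> wf_fm \<sigma> \<and> fv_fm \<sigma> = {}"

text \<open>An L-structure: domain D, constant interpretation c, function interpretation
fi (arity, symbol, arguments), relation interpretation ri.\<close>

fun tval :: "('a \<Rightarrow> 'c) \<Rightarrow> (nat \<Rightarrow> ('a list \<Rightarrow> 'a) \<Rightarrow> 'c list \<Rightarrow> 'c)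
      \<Rightarrow> (nat \<Rightarrow> 'c) \<Rightarrow> 'a tm \<Rightarrow> 'c" where
  "tval c fi e (Var v) = e v"
| "tval c fi e (Cst a) = c a"
| "tval c fi e (App n F ts) = fi n F (map (tval c fi e) ts)"

fun sat :: "'c set \<Rightarrow> ('a \<Rightarrow> 'c) \<Rightarrow> (nat \<Rightarrow> ('a list \<Rightarrow> 'a) \<Rightarrow> 'c list \<Rightarrow> 'c)
      \<Rightarrow> (nat \<Rightarrow> 'a list set \<Rightarrow> 'c list set) \<Rightarrow> (nat \<Rightarrow> 'c) \<Rightarrow> 'a fm \<Rightarrow> bool" where
  "sat D c fi ri e (Eq s t) = (tval c fi e s = tval c fi e t)"
| "sat D c fi ri e (Rl n R ts) = (map (tval c fi e) ts \<in> ri n R)"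
| "sat D c fi ri e (Neg p) = (\<not> sat D c fi ri e p)"
| "sat D c fi ri e (Conj p q) = (sat D c fi ri e p \<and> sat D c fi ri e q)"
| "sat D c fi ri e (Ex v p) = (\<exists>d\<in>D. sat D c fi ri (e(v := d)) p)"

definition holds :: "'c set \<Rightarrow> ('a \<Rightarrow> 'c) \<Rightarrow> (nat \<Rightarrow> ('a list \<Rightarrow> 'a) \<Rightarrow> 'c list \<Rightarrow> 'c)
      \<Rightarrow> (nat \<Rightarrow> 'a list set \<Rightarrow> 'c list set) \<Rightarrow> 'a fm \<Rightarrow> bool" where
  "holds D c fi ri \<sigma> \<longleftrightarrow> (\<forall>e. range e \<subseteq> D \<longrightarrow> sat D c fi ri e \<sigma>)"

definition holds_X :: "'a fm \<Rightarrow> bool" where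
  "holds_X \<sigma> \<longleftrightarrow> holds UNIV id (\<lambda>n F. F) (\<lambda>n R. R) \<sigma>"

definition Tran :: "'b topology \<Rightarrow> ('a \<Rightarrow> 'b) \<Rightarrow> (('a \<Rightarrow> 'a) \<Rightarrow> 'b \<Rightarrow> 'b) \<Rightarrow> bool" where
  "Tran T j star \<longleftrightarrow>
    (\<exists>(fi :: nat \<Rightarrow> ('a list \<Rightarrow> 'a) \<Rightarrow> 'b list \<Rightarrow> 'b) (ri :: nat \<Rightarrow> 'a list set \<Rightarrow> 'b list set).
       (\<forall>n F xs. length xs = n \<and> set xs \<subseteq> topspace T \<longrightarrow> fi n F xs \<in> topspace T) \<and>
       (\<forall>F. \<forall>\<xi>\<in>topspace T. fi 1 F [\<xi>] = star (\<lambda>x. F [x]) \<xi>) \<and>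
       (\<forall>R. \<forall>\<xi>\<in>topspace T. [\<xi>] \<in> ri 1 R \<longleftrightarrow> \<xi> \<in> starset T j {x. [x] \<in> R}) \<and>
       (\<forall>\<sigma>. sentence \<sigma> \<longrightarrow> (holds_X \<sigma> \<longleftrightarrow> holds (topspace T) j fi ri \<sigma>)))"

end

theory Submission
  imports Defs
begin

unbundle cardinal_syntax

text \<open>By Poss there is a nonprincipal point \<open>\<xi>\<close>, lying in \<open>*(X - {x})\<close> for every \<open>x\<close>; by Tran
the sets \<open>A\<close> with \<open>\<xi> \<in> *A\<close> form a filter none of whose members is a singleton. Since \<open>X\<close>
is infinite there is a surjection \<open>(p\<^sub>1, p\<^sub>2) : X \<rightarrow> X \<times> X\<close>. The preimages of that filter under \<open>p\<^sub>1\<close> and \<open>p\<^sub>2\<close>,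
together with the off-diagonal set \<open>{z. p\<^sub>1 z \<noteq> p\<^sub>2 z}\<close>, have the finite intersection property,
so Poss yields a point \<open>\<zeta>\<close> in all their extensions. Ind and Tran force \<open>*p\<^sub>1 \<zeta> = \<xi> = *p\<^sub>2 \<zeta>\<close>,
and transferring the equation puts \<open>\<zeta>\<close> into the extension of the diagonal as well,
contradicting Tran once more.\<close>

lemma infinite_UNIV_pairing:
  assumes "infinite (UNIV :: 'a set)"
  obtains p\<^sub>1 p\<^sub>2 :: "'a \<Rightarrow> 'a" where "\<And>a b. \<exists>z. p\<^sub>1 z = a \<and> p\<^sub>2 z = b"
proof -
  have "|(UNIV::'a set) \<times> (UNIV::'a set)| =o |UNIV::'a set|"
    using assms card_of_Times_same_infinite by blast
  then obtain f where "bij_betw f ((UNIV::'a set) \<times> (UNIV::'a set)) (UNIV::'a set)"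
    using card_of_ordIso by blast
  then have "bij_betw (inv_into UNIV f) (UNIV::'a set) (UNIV \<times> UNIV)"
    by (simp add: bij_betw_inv_into)
  then have "surj (inv_into UNIV f)"
    by (simp add: bij_betw_def)
  then have "\<exists>z. fst (inv_into UNIV f z) = a \<and> snd (inv_into UNIV f z) = b" for a b
    by (metis fst_conv snd_conv surjD)
  then show thesis
    by (rule that)
qed

lemma starset_subset_topspace: "starset T j A \<subseteq> topspace T"
  by (simp add: starset_def closure_of_subset_topspace)

lemma in_starset_topspace: "\<xi> \<in> starset T j A \<Longrightarrow> \<xi> \<in> topspace T"
  by (simp add: starset_def in_closure_of)

lemma starset_empty [simp]: "starset T j {} = {}"
  by (simp add: starset_def)

lemma starset_nonempty: "\<xi> \<in> starset T j A \<Longrightarrow> A \<noteq> {}"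
  by auto

lemma Poss_finite_intersection:
  assumes "Poss T j" and "\<And>G. finite G \<Longrightarrow> G \<subseteq> F \<Longrightarrow> \<Inter>G \<noteq> {}"
  shows "\<exists>\<zeta>. \<forall>A\<in>F. \<zeta> \<in> starset T j A"
proof -
  have "(\<Inter>A\<in>F. starset T j A) \<noteq> {}"
  proof
    assume empty: "(\<Inter>A\<in>F. starset T j A) = {}"
    obtain G where "finite G" "G \<subseteq> F" "\<Inter>G = {}"
      using assms(1)[unfolded Poss_def, rule_format, OF empty] by blast
    with assms(2) show False by blast
  qed
  then show ?thesis by auto
qed

lemma Poss_nonprincipal_point:
  assumes "Poss T j" and "infinite (UNIV :: 'a set)"
  obtains \<xi> where "\<And>x :: 'a. \<xi> \<in> starset T j (- {x})"
proof -
  have "\<exists>\<xi>. \<forall>A\<in>range (\<lambda>x::'a. - {x}). \<xi> \<in> starset T j A"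
  proof (rule Poss_finite_intersection[OF assms(1)])
    fix G assume G: "finite G" "G \<subseteq> range (\<lambda>x::'a. - {x})"
    obtain S where "finite S" "G = (\<lambda>x. - {x}) ` S"
      using finite_subset_image[OF G] by blast
    then have "\<Inter>G = - S" by auto
    moreover have "S \<noteq> UNIV"
      using \<open>finite S\<close> assms(2) by auto
    ultimately show "\<Inter>G \<noteq> {}"
      by blast
  qed
  then show thesis
    using that by blast
qed

lemma pairs_finite_intersection:
  fixes p\<^sub>1 p\<^sub>2 :: "'a \<Rightarrow> 'b"
  assumes onto: "\<And>a b. \<exists>z. p\<^sub>1 z = a \<and> p\<^sub>2 z = b"
    and "UNIV \<in> U" and Int: "\<And>A B. A \<in> U \<Longrightarrow> B \<in> U \<Longrightarrow> A \<inter> B \<in> U"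
    and two: "\<And>A. A \<in> U \<Longrightarrow> \<exists>a\<in>A. \<exists>b\<in>A. a \<noteq> b"
    and "finite G"
    and "G \<subseteq> vimage p\<^sub>1 ` U \<union> vimage p\<^sub>2 ` U \<union> {{z. p\<^sub>1 z \<noteq> p\<^sub>2 z}}"
  shows "\<Inter>G \<noteq> {}"
proof -
  let ?W = "\<lambda>C. {z. p\<^sub>1 z \<in> C \<and> p\<^sub>2 z \<in> C \<and> p\<^sub>1 z \<noteq> p\<^sub>2 z}"
  have "\<exists>C\<in>U. ?W C \<subseteq> \<Inter>G"
    using assms(5,6)
  proof (induction G rule: finite_induct)
    case empty
    then show ?case using \<open>UNIV \<in> U\<close> by blast
  next
    case (insert S G)
    then obtain C where C: "C \<in> U" "?W C \<subseteq> \<Inter>G" by blast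
    have "S \<in> vimage p\<^sub>1 ` U \<union> vimage p\<^sub>2 ` U \<union> {{z. p\<^sub>1 z \<noteq> p\<^sub>2 z}}"
      using insert.prems by simp
    then consider
      A where "A \<in> U" "S = p\<^sub>1 -` A" | A where "A \<in> U" "S = p\<^sub>2 -` A"
      | "S = {z. p\<^sub>1 z \<noteq> p\<^sub>2 z}"
      by blast
    then show ?case
    proof cases
      case (1 A)
      then have "?W (C \<inter> A) \<subseteq> \<Inter>(insert S G)" using C by auto
      with Int[OF \<open>C \<in> U\<close> \<open>A \<in> U\<close>] show ?thesis by blast
    next
      case (2 A)
      then have "?W (C \<inter> A) \<subseteq> \<Inter>(insert S G)" using C by auto
      with Int[OF \<open>C \<in> U\<close> \<open>A \<in> U\<close>] show ?thesis by blast
    next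
      case 3
      then have "?W C \<subseteq> \<Inter>(insert S G)" using C by auto
      with \<open>C \<in> U\<close> show ?thesis by blast
    qed
  qed
  then obtain C where "C \<in> U" "?W C \<subseteq> \<Inter>G" by blast
  moreover obtain a b where "a \<in> C" "b \<in> C" "a \<noteq> b"
    using two[OF \<open>C \<in> U\<close>] by blast
  moreover obtain z where "p\<^sub>1 z = a" "p\<^sub>2 z = b"
    using onto by blast
  ultimately have "z \<in> \<Inter>G" by auto
  then show ?thesis by blast
qed

definition unary_rel :: "'a set \<Rightarrow> 'a list set" where
  "unary_rel A = (\<lambda>x. [x]) ` A"

definition unary_fn :: "('a \<Rightarrow> 'a) \<Rightarrow> 'a list \<Rightarrow> 'a" where
  "unary_fn p = (\<lambda>xs. p (hd xs))"

lemma unary_rel_iff [simp]: "[x] \<in> unary_rel A \<longleftrightarrow> x \<in> A"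
  by (auto simp: unary_rel_def)

lemma unary_fn_apply [simp]: "unary_fn p [x] = p x"
  by (simp add: unary_fn_def)

abbreviation in_fm :: "'a set \<Rightarrow> 'a tm \<Rightarrow> 'a fm" where
  "in_fm A t \<equiv> Rl 1 (unary_rel A) [t]"

abbreviation app_tm :: "('a \<Rightarrow> 'a) \<Rightarrow> 'a tm \<Rightarrow> 'a tm" where
  "app_tm p t \<equiv> App 1 (unary_fn p) [t]"

abbreviation imp_fm :: "'a fm \<Rightarrow> 'a fm \<Rightarrow> 'a fm" where
  "imp_fm p q \<equiv> Neg (Conj p (Neg q))"

(* Otherwise simp rewrites the arity 1 in fi 1 and ri 1 to Suc 0, and the rules below no longer match. *)
declare One_nat_def [simp del]

locale Tran_interpretation =
  fixes T :: "'b topology" and j :: "'a \<Rightarrow> 'b" and star :: "('a \<Rightarrow> 'a) \<Rightarrow> 'b \<Rightarrow> 'b"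
    and fi :: "nat \<Rightarrow> ('a list \<Rightarrow> 'a) \<Rightarrow> 'b list \<Rightarrow> 'b"
    and ri :: "nat \<Rightarrow> 'a list set \<Rightarrow> 'b list set"
  assumes fi_topspace: "\<And>n F xs. length xs = n \<Longrightarrow> set xs \<subseteq> topspace T \<Longrightarrow> fi n F xs \<in> topspace T"
    and fi_unary: "\<And>F \<xi>. \<xi> \<in> topspace T \<Longrightarrow> fi 1 F [\<xi>] = star (\<lambda>x. F [x]) \<xi>"
    and ri_unary: "\<And>R \<xi>. \<xi> \<in> topspace T \<Longrightarrow> [\<xi>] \<in> ri 1 R \<longleftrightarrow> \<xi> \<in> starset T j {x. [x] \<in> R}"
    and transfer: "\<And>\<sigma>. sentence \<sigma> \<Longrightarrow> holds_X \<sigma> \<longleftrightarrow> holds (topspace T) j fi ri \<sigma>"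
begin

lemma ri_unary_rel [simp]: "\<xi> \<in> topspace T \<Longrightarrow> [\<xi>] \<in> ri 1 (unary_rel A) \<longleftrightarrow> \<xi> \<in> starset T j A"
  by (simp add: ri_unary)

lemma fi_unary_fn [simp]: "\<xi> \<in> topspace T \<Longrightarrow> fi 1 (unary_fn p) [\<xi>] = star p \<xi>"
  by (simp add: fi_unary)

lemma star_in_topspace: "\<xi> \<in> topspace T \<Longrightarrow> star p \<xi> \<in> topspace T"
  using fi_topspace[of "[\<xi>]" 1 "unary_fn p"] by simp

lemma transfer_valid:
  assumes "wf_fm \<phi>" and "fv_fm \<phi> \<subseteq> {0}"
    and "\<And>e. sat UNIV id (\<lambda>n F. F) (\<lambda>n R. R) e \<phi>"
    and "\<xi> \<in> topspace T"
  shows "sat (topspace T) j fi ri (\<lambda>_. \<xi>) \<phi>"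
proof -
  let ?\<sigma> = "Neg (Ex 0 (Neg \<phi>))"
  have "sentence ?\<sigma>"
    using assms(1,2) by (auto simp: sentence_def)
  moreover have "holds_X ?\<sigma>"
    using assms(3) by (simp add: holds_X_def holds_def)
  ultimately have "holds (topspace T) j fi ri ?\<sigma>"
    using transfer by blast
  then have "sat (topspace T) j fi ri ((\<lambda>_. \<xi>)(0 := \<xi>)) \<phi>"
    using assms(4) by (auto simp: holds_def)
  moreover have "(\<lambda>_::nat. \<xi>)(0 := \<xi>) = (\<lambda>_. \<xi>)"
    by (rule ext) simp
  ultimately show ?thesis by simp
qed

lemma starset_UNIV: "starset T j UNIV = topspace T"
proof
  show "topspace T \<subseteq> starset T j UNIV"
  proof
    fix \<xi> assume "\<xi> \<in> topspace T"
    then have "sat (topspace T) j fi ri (\<lambda>_. \<xi>) (in_fm UNIV (Var 0))"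
      by (intro transfer_valid) auto
    with \<open>\<xi> \<in> topspace T\<close> show "\<xi> \<in> starset T j UNIV" by simp
  qed
qed (rule starset_subset_topspace)

lemma starset_Int:
  assumes "\<xi> \<in> starset T j A" and "\<xi> \<in> starset T j B"
  shows "\<xi> \<in> starset T j (A \<inter> B)"
proof -
  have \<xi>: "\<xi> \<in> topspace T"
    using assms(1) by (rule in_starset_topspace)
  then have "sat (topspace T) j fi ri (\<lambda>_. \<xi>)
      (imp_fm (Conj (in_fm A (Var 0)) (in_fm B (Var 0))) (in_fm (A \<inter> B) (Var 0)))"
    by (intro transfer_valid) auto
  with assms \<xi> show ?thesis by simp
qed

lemma starset_compl_disjoint: "\<xi> \<notin> starset T j A \<or> \<xi> \<notin> starset T j (- A)"
proof (cases "\<xi> \<in> topspace T")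
  case True
  then have "sat (topspace T) j fi ri (\<lambda>_. \<xi>)
      (Neg (Conj (in_fm A (Var 0)) (in_fm (- A) (Var 0))))"
    by (intro transfer_valid) auto
  with True show ?thesis by simp
qed (metis in_starset_topspace)

lemma star_in_starset_vimage:
  assumes "\<xi> \<in> starset T j (p -` A)"
  shows "star p \<xi> \<in> starset T j A"
proof -
  have \<xi>: "\<xi> \<in> topspace T"
    using assms by (rule in_starset_topspace)
  then have "sat (topspace T) j fi ri (\<lambda>_. \<xi>)
      (imp_fm (in_fm (p -` A) (Var 0)) (in_fm A (app_tm p (Var 0))))"
    by (intro transfer_valid) auto
  with assms \<xi> star_in_topspace show ?thesis by simp
qed

lemma in_starset_equalizer:
  assumes "\<xi> \<in> topspace T" and "star p\<^sub>1 \<xi> = star p\<^sub>2 \<xi>"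
  shows "\<xi> \<in> starset T j {z. p\<^sub>1 z = p\<^sub>2 z}"
proof -
  have "sat (topspace T) j fi ri (\<lambda>_. \<xi>)
      (imp_fm (Eq (app_tm p\<^sub>1 (Var 0)) (app_tm p\<^sub>2 (Var 0))) (in_fm {z. p\<^sub>1 z = p\<^sub>2 z} (Var 0)))"
    using assms(1) by (intro transfer_valid) auto
  with assms show ?thesis by simp
qed

lemma star_eq_by_Ind:
  assumes "Ind T j" and "\<xi> \<in> topspace T" and "\<zeta> \<in> topspace T"
    and "\<And>A. \<xi> \<in> starset T j A \<Longrightarrow> \<zeta> \<in> starset T j (p -` A)"
  shows "star p \<zeta> = \<xi>"
proof (rule ccontr)
  assume "star p \<zeta> \<noteq> \<xi>"
  with assms(1-3) star_in_topspace obtain A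
    where "\<xi> \<in> starset T j A" "star p \<zeta> \<notin> starset T j A"
    unfolding Ind_def by metis
  with assms(4) star_in_starset_vimage show False by blast
qed

lemma nonprincipal_two_points:
  assumes "\<And>x. \<xi> \<in> starset T j (- {x})" and "\<xi> \<in> starset T j A"
  shows "\<exists>a\<in>A. \<exists>b\<in>A. a \<noteq> b"
proof -
  obtain a where "a \<in> A"
    using starset_nonempty[OF assms(2)] by blast
  moreover obtain b where "b \<in> A \<inter> - {a}"
    using starset_nonempty[OF starset_Int[OF assms(2,1)]] by blast
  ultimately show ?thesis by blast
qed

theorem not_Ind_and_Poss:
  assumes "infinite (UNIV :: 'a set)"
  shows "\<not> (Ind T j \<and> Poss T j)"
proof
  assume "Ind T j \<and> Poss T j"
  then have ind: "Ind T j" and poss: "Poss T j" by auto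
  obtain \<xi> where nonprincipal: "\<And>x. \<xi> \<in> starset T j (- {x})"
    using Poss_nonprincipal_point[OF poss assms] by blast
  have \<xi>: "\<xi> \<in> topspace T"
    using nonprincipal by (rule in_starset_topspace)
  define U where "U = {A. \<xi> \<in> starset T j A}"
  have "UNIV \<in> U"
    using \<xi> by (simp add: U_def starset_UNIV)
  have U_Int: "A \<inter> B \<in> U" if "A \<in> U" "B \<in> U" for A B
    using that starset_Int by (simp add: U_def)
  have U_two_points: "\<exists>a\<in>A. \<exists>b\<in>A. a \<noteq> b" if "A \<in> U" for A
    using that nonprincipal_two_points[OF nonprincipal] by (simp add: U_def)
  obtain p\<^sub>1 p\<^sub>2 :: "'a \<Rightarrow> 'a" where onto: "\<And>a b. \<exists>z. p\<^sub>1 z = a \<and> p\<^sub>2 z = b"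
    using infinite_UNIV_pairing[OF assms] by blast
  have "\<exists>\<zeta>. \<forall>S \<in> vimage p\<^sub>1 ` U \<union> vimage p\<^sub>2 ` U \<union> {{z. p\<^sub>1 z \<noteq> p\<^sub>2 z}}. \<zeta> \<in> starset T j S"
    by (rule Poss_finite_intersection[OF poss
          pairs_finite_intersection[OF onto \<open>UNIV \<in> U\<close> U_Int U_two_points]])
  then obtain \<zeta> where
    \<zeta>: "\<forall>S \<in> vimage p\<^sub>1 ` U \<union> vimage p\<^sub>2 ` U \<union> {{z. p\<^sub>1 z \<noteq> p\<^sub>2 z}}. \<zeta> \<in> starset T j S"
    by blast
  then have \<zeta>_offdiag: "\<zeta> \<in> starset T j {z. p\<^sub>1 z \<noteq> p\<^sub>2 z}"
    by blast
  then have \<zeta>_top: "\<zeta> \<in> topspace T"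
    by (rule in_starset_topspace)
  have "star p\<^sub>1 \<zeta> = \<xi>" and "star p\<^sub>2 \<zeta> = \<xi>"
    by (rule star_eq_by_Ind[OF ind \<xi> \<zeta>_top], use \<zeta> in \<open>auto simp: U_def\<close>)+
  then have "\<zeta> \<in> starset T j {z. p\<^sub>1 z = p\<^sub>2 z}"
    using in_starset_equalizer[OF \<zeta>_top, of p\<^sub>1 p\<^sub>2] by simp
  with \<zeta>_offdiag starset_compl_disjoint[of \<zeta> "{z. p\<^sub>1 z = p\<^sub>2 z}"] show False
    by (simp add: Collect_neg_eq[symmetric])
qed

end

lemma TranE:
  assumes "Tran T j star"
  obtains fi ri where "Tran_interpretation T j star fi ri"
proof -
  obtain fi ri where
      "\<forall>n F xs. length xs = n \<and> set xs \<subseteq> topspace T \<longrightarrow> fi n F xs \<in> topspace T"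
      "\<forall>F. \<forall>\<xi>\<in>topspace T. fi 1 F [\<xi>] = star (\<lambda>x. F [x]) \<xi>"
      "\<forall>R. \<forall>\<xi>\<in>topspace T. [\<xi>] \<in> ri 1 R \<longleftrightarrow> \<xi> \<in> starset T j {x. [x] \<in> R}"
      "\<forall>\<sigma>. sentence \<sigma> \<longrightarrow> (holds_X \<sigma> \<longleftrightarrow> holds (topspace T) j fi ri \<sigma>)"
    using assms unfolding Tran_def by (elim exE conjE)
  then have "Tran_interpretation T j star fi ri"
    by unfold_locales auto
  then show thesis
    by (rule that)
qed

theorem corollary2p4:
  fixes T :: "'b topology" and j :: "'a \<Rightarrow> 'b" and star :: "('a \<Rightarrow> 'a) \<Rightarrow> 'b \<Rightarrow> 'b"
  assumes "infinite (UNIV :: 'a set)"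
    and "top_ext T j star"
  shows "\<not> (Ind T j \<and> Poss T j \<and> Tran T j star)"
proof
  assume H: "Ind T j \<and> Poss T j \<and> Tran T j star"
  then obtain fi ri where "Tran_interpretation T j star fi ri"
    using TranE by blast
  from Tran_interpretation.not_Ind_and_Poss[OF this assms(1)] H show False
    by simp
qed

end
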